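(* Let $R>0$, let $\mathcal K$ be a nonempty closed subset of $S^{d-1}$ contained in a hemisphere $\{v\in S^{d-1}:\langle v,w\rangle\ge0\}$ for some $w\in S^{d-1}$, and let $\mathcal N=\mathrm{Nor}(C_{\mathcal K},o)\cap S^{d-1}$. The following are equivalent: (a) $\mathcal K$ is spherically convex; (b) $\mathrm{reach}(C_{\mathcal K})\ge R$; (c) $C_{\mathcal K}=C_{\mathcal N}$.
   Context: $S^{d-1}$ is the unit sphere, $o$ the origin, $B(x)=\{y:|y-x|<R\}$, $co(\cdot)$ the convex hull. For $\mathcal K\subset S^{d-1}$, $C_{\mathcal K}=\bigcap_{v\in\mathcal K}(\mathbb{R}^d\setminus B(Rv))$ is the $R$-cone with vertex $o$. With $K=\{\lambda v:\lambda\ge0,v\in\mathcal K\}$, the spherical convex hull is $co_{sph}(\mathcal K)=co(K)\cap S^{d-1}$, and $\mathcal K$ is spherically convex if $co_{sph}(\mathcal K)=\mathcal K$. Tangent cone: $\mathrm{Tan}(A,q)=\{v: \forall\varepsilon>0\ \exists x\in A,\ |x-q|<\varepsilon,\ \exists r>0,\ |r(x-q)-v|<\varepsilon\}$; normal cone: $\mathrm{Nor}(A,q)=\{u:\langle u,v\rangle\le0\ \forall v\in\mathrm{Tan}(A,q)\}$. $\mathrm{Unp}(A)$ is the set of points with a unique nearest point in $A$; $\mathrm{reach}(A,a)=\sup\{\rho>0:\{x:|x-a|<\rho\}\subset\mathrm{Unp}(A)\}$, $\mathrm{reach}(A)=\inf_{a\in A}\mathrm{reach}(A,a)$. *)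

theory Defs
  imports "HOL-Analysis.Analysis"
begin

definition Rcone :: "real \<Rightarrow> 'a::euclidean_space set \<Rightarrow> 'a set" where
  "Rcone R K = (\<Inter>v\<in>K. UNIV - ball (R *\<^sub>R v) R)"

definition gen_cone :: "'a::euclidean_space set \<Rightarrow> 'a set" where
  "gen_cone K = {t *\<^sub>R v | t v. t \<ge> 0 \<and> v \<in> K}"

definition co_sph :: "'a::euclidean_space set \<Rightarrow> 'a set" where
  "co_sph K = convex hull (gen_cone K) \<inter> sphere 0 1"

definition sph_convex :: "'a::euclidean_space set \<Rightarrow> bool" where
  "sph_convex K \<longleftrightarrow> co_sph K = K"

definition Tan :: "'a::euclidean_space set \<Rightarrow> 'a \<Rightarrow> 'a set" where
  "Tan A q = {v. \<forall>\<epsilon>>0. \<exists>x\<in>A. norm (x - q) < \<epsilon> \<and> (\<exists>r>0. norm (r *\<^sub>R (x - q) - v) < \<epsilon>)}"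

definition Nor :: "'a::euclidean_space set \<Rightarrow> 'a \<Rightarrow> 'a set" where
  "Nor A q = {u. \<forall>v\<in>Tan A q. inner u v \<le> 0}"

definition Unp :: "'a::euclidean_space set \<Rightarrow> 'a set" where
  "Unp A = {x. \<exists>!a. a \<in> A \<and> (\<forall>b\<in>A. dist x a \<le> dist x b)}"

text \<open>Reach, valued in the extended reals (may be infinite; sup of the empty set is -\<infinity>).\<close>
definition reach_at :: "'a::euclidean_space set \<Rightarrow> 'a \<Rightarrow> ereal" where
  "reach_at A a = (SUP \<rho>\<in>{\<rho>. \<rho> > 0 \<and> ball a \<rho> \<subseteq> Unp A}. ereal \<rho>)"

definition reach :: "'a::euclidean_space set \<Rightarrow> ereal" where
  "reach A = (INF a\<in>A. reach_at A a)"

end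

theory Submission
  imports Defs
begin

text \<open>
  A point $x$ lies in $C_{\mathcal K}$ iff $2R\langle x,k\rangle \le |x|^2$ for all $k \in \mathcal K$.
  If $\mathcal K$ is spherically convex and $x \notin C_{\mathcal K}$ is within $R$ of the cone, let
  $v \in \mathcal K$ maximize $\langle x,\cdot\rangle$; moving along arcs from $v$ shows
  $\langle x,k\rangle \le \langle x,v\rangle\langle v,k\rangle$ on $\mathcal K$, so the point where the ray from
  $Rv$ through $x$ leaves $B(Rv)$ lies in the cone and is the unique nearest point to $x$.

  Conversely, project a unit vector $u \notin \mathcal K$ onto $M = co(\{o\} \cup \mathcal K)$, with
  projection $q$. Either $\langle u-q, q\rangle > 0$, and then $Rq$ (at distance $< R$ from $o$) has the
  two nearest points $o$ and a positive multiple of $u - q$; or $u - q$ is a direction with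
  $\langle u-q, k\rangle \le 0$ on $\mathcal K$ and $\langle u-q, u\rangle > 0$, which is impossible
  for $u \in co_{sph}(\mathcal K)$ and for $u \in \mathcal N$. Finally, a point
  $u \in co_{sph}(\mathcal K) \setminus \mathcal K$ lies in $\mathcal N$, and a point on the ray through $u$
  separates $C_{\mathcal K}$ from $C_{\mathcal N}$.
\<close>

lemma norm_diff_power2:
  fixes x y :: "'a::real_inner"
  shows "(norm (x - y))\<^sup>2 = (norm x)\<^sup>2 - 2 * inner x y + (norm y)\<^sup>2"
  by (simp add: power2_norm_eq_inner inner_diff_left inner_diff_right inner_commute)

lemma norm_diff_scaleR_unit_power2:
  fixes x k :: "'a::real_inner"
  assumes "norm k = 1"
  shows "(norm (x - r *\<^sub>R k))\<^sup>2 = (norm x)\<^sup>2 - 2 * r * inner x k + r\<^sup>2"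
  using assms by (simp add: norm_diff_power2 power_mult_distrib)

lemma eq_if_norm_eq_inner_eq:
  fixes v w :: "'a::real_inner"
  assumes "norm v = r" "norm w = r" "inner v w = r\<^sup>2"
  shows "v = w"
proof -
  have "(norm (v - w))\<^sup>2 = 0"
    using assms by (simp add: norm_diff_power2)
  then show ?thesis by simp
qed

lemma mem_Unp_if_mem:
  assumes "x \<in> A"
  shows "x \<in> Unp A"
  unfolding Unp_def using assms by (intro CollectI ex1I[of _ x]) force+

lemma not_mem_Unp_if_two_nearest:
  assumes "p \<in> A" "q \<in> A" "p \<noteq> q" "dist x p = dist x q" "\<forall>b\<in>A. dist x p \<le> dist x b"
  shows "x \<notin> Unp A"
proof
  assume "x \<in> Unp A"
  then obtain a where uniq: "\<And>b. b \<in> A \<and> (\<forall>b'\<in>A. dist x b \<le> dist x b') \<Longrightarrow> b = a"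
    unfolding Unp_def by blast
  have "p = a" "q = a" by (rule uniq; use assms in simp)+
  with \<open>p \<noteq> q\<close> show False by simp
qed

lemma mem_Unp_if_touching_ball:
  fixes A :: "'a::euclidean_space set"
  assumes disj: "A \<inter> ball c r = {}" and p: "p \<in> A" "dist c p = r"
    and x: "x \<in> closed_segment c p" "x \<noteq> c"
  shows "x \<in> Unp A"
proof -
  obtain s where "0 \<le> s" "s \<le> 1" and "x = (1 - s) *\<^sub>R c + s *\<^sub>R p"
    using x by (auto simp: in_segment)
  moreover from this have xs: "x = c + s *\<^sub>R (p - c)" by (simp add: algebra_simps)
  moreover from this have "s \<noteq> 0" using x by auto
  ultimately have s: "0 < s" "s \<le> 1" by auto
  have pc: "norm (p - c) = r" using p by (simp add: dist_norm norm_minus_commute)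
  have far: "r \<le> dist c b" if "b \<in> A" for b
    using disj that by (auto simp: not_less)
  have "dist c x = norm (s *\<^sub>R (p - c))" "dist x p = norm ((1 - s) *\<^sub>R (p - c))"
    unfolding xs dist_norm by (simp_all add: norm_minus_commute algebra_simps)
  then have dcx: "dist c x = s * r" and dxp: "dist x p = (1 - s) * r"
    using s pc by simp_all
  show ?thesis unfolding Unp_def mem_Collect_eq
  proof (rule ex1I[of _ p])
    have "dist x p \<le> dist x b" if "b \<in> A" for b
      using far[OF that] dist_triangle[of c b x] dcx dxp by (simp add: algebra_simps)
    then show "p \<in> A \<and> (\<forall>b\<in>A. dist x p \<le> dist x b)" using p by blast
  next
    fix b assume b: "b \<in> A \<and> (\<forall>b'\<in>A. dist x b \<le> dist x b')"
    then have "dist x b \<le> (1 - s) * r" using p dxp by metis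
    moreover have "r \<le> dist c b" using far b by blast
    moreover have "dist c b \<le> s * r + dist x b" using dist_triangle[of c b x] dcx by simp
    ultimately have "dist c b = r" and "dist x b = (1 - s) * r" by (simp_all add: algebra_simps)
    moreover have "dist c b = norm (b - c)" "dist x b = norm (b - c - s *\<^sub>R (p - c))"
      unfolding xs dist_norm by (simp_all add: norm_minus_commute algebra_simps)
    ultimately have cb: "norm (b - c) = r" and xb: "norm (b - c - s *\<^sub>R (p - c)) = (1 - s) * r"
      by simp_all
    have "((1 - s) * r)\<^sup>2 = r\<^sup>2 - 2 * s * inner (b - c) (p - c) + s\<^sup>2 * r\<^sup>2"
      using norm_diff_power2[of "b - c" "s *\<^sub>R (p - c)"] cb pc xb by (simp add: power_mult_distrib)
    then have "s * inner (b - c) (p - c) = s * r\<^sup>2"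
      by (simp add: power2_eq_square algebra_simps)
    then have "inner (b - c) (p - c) = r\<^sup>2" using s by simp
    then have "b - c = p - c" by (rule eq_if_norm_eq_inner_eq[OF cb pc])
    then show "b = p" by simp
  qed
qed

lemma reach_ge_if_balls_subset_Unp:
  assumes "R > 0" "\<And>a. a \<in> A \<Longrightarrow> ball a R \<subseteq> Unp A"
  shows "ereal R \<le> reach A"
  unfolding reach_def reach_at_def
  using assms by (intro INF_greatest SUP_upper) auto

lemma ball_subset_Unp_if_reach_ge:
  assumes "a \<in> A" "ereal R \<le> reach A"
  shows "ball a R \<subseteq> Unp A"
proof
  fix x assume "x \<in> ball a R"
  have "ereal (dist a x) < ereal R" using \<open>x \<in> ball a R\<close> by simp
  also have "\<dots> \<le> reach_at A a"
    using assms INF_lower[of a A "reach_at A"] unfolding reach_def by simp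
  finally have "ereal (dist a x) < reach_at A a" .
  then obtain \<rho> where "\<rho> > 0" "ball a \<rho> \<subseteq> Unp A" "dist a x < \<rho>"
    unfolding reach_at_def less_SUP_iff by auto
  then show "x \<in> Unp A" by auto
qed

lemma mem_Rcone_iff_dist:
  "x \<in> Rcone R K \<longleftrightarrow> (\<forall>k\<in>K. R \<le> norm (x - R *\<^sub>R k))"
  unfolding Rcone_def by (simp add: dist_norm norm_minus_commute not_less)

lemma mem_Rcone_iff_inner:
  fixes K :: "'a::euclidean_space set"
  assumes R: "R > 0" and K: "K \<subseteq> sphere 0 1"
  shows "x \<in> Rcone R K \<longleftrightarrow> (\<forall>k\<in>K. 2 * R * inner x k \<le> (norm x)\<^sup>2)"
proof -
  have "R \<le> norm (x - R *\<^sub>R k) \<longleftrightarrow> 2 * R * inner x k \<le> (norm x)\<^sup>2" if "k \<in> K" for k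
  proof -
    have "(norm (x - R *\<^sub>R k))\<^sup>2 = (norm x)\<^sup>2 - 2 * R * inner x k + R\<^sup>2"
      using K that by (intro norm_diff_scaleR_unit_power2) auto
    moreover have "R \<le> norm (x - R *\<^sub>R k) \<longleftrightarrow> R\<^sup>2 \<le> (norm (x - R *\<^sub>R k))\<^sup>2"
      using R by (simp add: abs_le_square_iff[symmetric])
    ultimately show ?thesis by linarith
  qed
  then show ?thesis
    unfolding mem_Rcone_iff_dist by blast
qed

lemma zero_mem_Rcone:
  fixes K :: "'a::euclidean_space set"
  assumes "R > 0" "K \<subseteq> sphere 0 1"
  shows "0 \<in> Rcone R K"
  using assms by (simp add: mem_Rcone_iff_inner)

lemma Rcone_inner_le_convex_hull:
  fixes K :: "'a::euclidean_space set"
  assumes R: "R > 0" and K: "K \<subseteq> sphere 0 1"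
    and y: "y \<in> Rcone R K" and m: "m \<in> convex hull (insert 0 K)"
  shows "2 * R * inner y m \<le> (norm y)\<^sup>2"
proof -
  have "insert 0 K \<subseteq> {m. inner ((2 * R) *\<^sub>R y) m \<le> (norm y)\<^sup>2}"
    using y mem_Rcone_iff_inner[OF R K] by auto
  then have "convex hull (insert 0 K) \<subseteq> {m. inner ((2 * R) *\<^sub>R y) m \<le> (norm y)\<^sup>2}"
    by (intro hull_minimal convex_halfspace_le)
  then show ?thesis using m by auto
qed

lemma Tan_Rcone_zero:
  fixes K :: "'a::euclidean_space set"
  assumes R: "R > 0" and K: "K \<subseteq> sphere 0 1"
  shows "Tan (Rcone R K) 0 = {v. \<forall>k\<in>K. inner v k \<le> 0}"
proof (intro set_eqI iffI; clarsimp)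
  fix v k assume v: "v \<in> Tan (Rcone R K) 0" and k: "k \<in> K"
  show "inner v k \<le> 0"
  proof (rule ccontr)
    assume "\<not> inner v k \<le> 0"
    then have vk: "inner v k > 0" by simp
    define e where "e = min 1 (min (inner v k / 2) (R * inner v k / (norm v + 1)))"
    have "norm v + 1 > 0" by (simp add: add_nonneg_pos)
    then have e0: "e > 0" unfolding e_def using vk R by simp
    obtain x r where x: "x \<in> Rcone R K" "norm x < e" and r: "r > 0" "norm (r *\<^sub>R x - v) < e"
      using v e0 unfolding Tan_def by auto
    \<comment> \<open>$2R\langle rx, k\rangle \le r|x|^2 = |rx|\,|x| = O(e)$, so the direction $rx \approx v$ cannot have $\langle v, k\rangle > 0$.\<close>
    have "2 * R * inner x k \<le> (norm x)\<^sup>2" using x(1) k mem_Rcone_iff_inner[OF R K] by blast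
    then have "2 * R * inner (r *\<^sub>R x) k \<le> r * (norm x)\<^sup>2"
      using r by (simp add: mult.left_commute)
    also have "\<dots> = norm (r *\<^sub>R x) * norm x" using r by (simp add: power2_eq_square)
    also have "\<dots> \<le> (norm v + 1) * e"
    proof (rule mult_mono)
      show "norm (r *\<^sub>R x) \<le> norm v + 1"
        using norm_triangle_ineq2[of "r *\<^sub>R x" v] r(2) unfolding e_def by simp
    qed (use x in auto)
    also have "\<dots> \<le> R * inner v k"
    proof -
      have "e \<le> R * inner v k / (norm v + 1)" unfolding e_def by simp
      then show ?thesis by (simp add: field_simps add_pos_nonneg)
    qed
    finally have "inner (r *\<^sub>R x) k \<le> inner v k / 2" using R by (simp add: field_simps)
    moreover have "inner (v - r *\<^sub>R x) k \<le> norm (v - r *\<^sub>R x)"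
      using norm_cauchy_schwarz[of "v - r *\<^sub>R x" k] K k by auto
    moreover have "norm (v - r *\<^sub>R x) < inner v k / 2"
      using r(2) unfolding e_def by (simp add: norm_minus_commute)
    ultimately show False by (simp add: inner_diff_left)
  qed
next
  fix v assume v: "\<forall>k\<in>K. inner v k \<le> 0"
  show "v \<in> Tan (Rcone R K) 0"
    unfolding Tan_def
  proof (intro CollectI allI impI)
    fix e :: real assume e: "e > 0"
    define t where "t = e / (2 * (norm v + 1))"
    have nv: "norm v + 1 > 0" by (simp add: add_nonneg_pos)
    then have t0: "t > 0" unfolding t_def using e by simp
    have "t *\<^sub>R v \<in> Rcone R K"
      unfolding mem_Rcone_iff_inner[OF R K]
      using v t0 R by (auto intro: order_trans[OF _ zero_le_power2] simp: mult_nonneg_nonpos)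
    moreover have "norm (t *\<^sub>R v) < e"
    proof -
      have "norm (t *\<^sub>R v) \<le> t * (norm v + 1)" using t0 by simp
      also have "\<dots> = e / 2" unfolding t_def using nv by (simp add: field_simps)
      finally show ?thesis using e by simp
    qed
    moreover have "norm ((1 / t) *\<^sub>R (t *\<^sub>R v - 0) - v) < e" using t0 e by simp
    ultimately show "\<exists>x\<in>Rcone R K. norm (x - 0) < e \<and> (\<exists>r>0. norm (r *\<^sub>R (x - 0) - v) < e)"
      using t0 by (intro bexI[of _ "t *\<^sub>R v"] conjI exI[of _ "1 / t"]) auto
  qed
qed

lemma Nor_Rcone_zero:
  fixes K :: "'a::euclidean_space set"
  assumes "R > 0" "K \<subseteq> sphere 0 1"
  shows "Nor (Rcone R K) 0 = {u. \<forall>v. (\<forall>k\<in>K. inner v k \<le> 0) \<longrightarrow> inner u v \<le> 0}"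
  unfolding Nor_def Tan_Rcone_zero[OF assms] by blast

lemma subset_co_sph:
  fixes K :: "'a::euclidean_space set"
  assumes "K \<subseteq> sphere 0 1"
  shows "K \<subseteq> co_sph K"
proof
  fix v assume v: "v \<in> K"
  have "v \<in> gen_cone K"
    unfolding gen_cone_def by (rule CollectI, rule exI[of _ 1], rule exI[of _ v]) (simp add: v)
  then show "v \<in> co_sph K" using assms v hull_inc unfolding co_sph_def by fastforce
qed

lemma inner_co_sph_le_zero:
  fixes K :: "'a::euclidean_space set"
  assumes u: "u \<in> co_sph K" and v: "\<forall>k\<in>K. inner v k \<le> 0"
  shows "inner v u \<le> 0"
proof -
  have "gen_cone K \<subseteq> {y. inner v y \<le> 0}"
    unfolding gen_cone_def using v by (auto simp: mult_nonneg_nonpos)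
  then have "convex hull gen_cone K \<subseteq> {y. inner v y \<le> 0}"
    by (intro hull_minimal convex_halfspace_le)
  then show ?thesis using u unfolding co_sph_def by auto
qed

lemma convex_hull_insert_zero_inter_sphere:
  fixes K :: "'a::euclidean_space set"
  assumes K: "K \<subseteq> sphere 0 1"
  shows "convex hull (insert 0 K) \<inter> sphere 0 1 \<subseteq> K"
proof
  fix x assume x: "x \<in> convex hull (insert 0 K) \<inter> sphere 0 1"
  have sub: "convex hull (insert 0 K) \<subseteq> cball 0 1"
    using K by (intro hull_minimal) auto
  \<comment> \<open>Points of the unit sphere are extreme points of the unit ball.\<close>
  have "x extreme_point_of (convex hull (insert 0 K))"
    unfolding extreme_point_of_def
  proof (intro conjI ballI notI)
    fix a b assume "a \<in> convex hull (insert 0 K)" "b \<in> convex hull (insert 0 K)"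
      "x \<in> open_segment a b"
    then show False
      using dist_decreases_open_segment[of x a b 0] sub x by auto
  qed (use x in auto)
  then show "x \<in> K" using x extreme_point_of_convex_hull by fastforce
qed

lemma sph_convex_normalized_combination:
  fixes K :: "'a::euclidean_space set"
  assumes sc: "sph_convex K" and v: "v \<in> K" and k: "k \<in> K" and l: "0 \<le> l" "l \<le> 1"
    and w: "(1 - l) *\<^sub>R v + l *\<^sub>R k \<noteq> 0"
  shows "(1 / norm ((1 - l) *\<^sub>R v + l *\<^sub>R k)) *\<^sub>R ((1 - l) *\<^sub>R v + l *\<^sub>R k) \<in> K"
proof -
  let ?w = "(1 - l) *\<^sub>R v + l *\<^sub>R k"
  let ?c = "1 / norm ?w"
  have "?c *\<^sub>R v \<in> gen_cone K" "?c *\<^sub>R k \<in> gen_cone K"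
    unfolding gen_cone_def using v k by force+
  then have "(1 - l) *\<^sub>R (?c *\<^sub>R v) + l *\<^sub>R (?c *\<^sub>R k) \<in> convex hull gen_cone K"
    using l by (intro convexD[OF convex_convex_hull] hull_inc) auto
  moreover have "(1 - l) *\<^sub>R (?c *\<^sub>R v) + l *\<^sub>R (?c *\<^sub>R k) = ?c *\<^sub>R ?w"
    by (simp add: scaleR_add_right)
  moreover have "norm (?c *\<^sub>R ?w) = 1" using w by simp
  ultimately have "?c *\<^sub>R ?w \<in> co_sph K" unfolding co_sph_def by auto
  then show ?thesis using sc unfolding sph_convex_def by simp
qed

lemma sph_convex_inner_le_at_maximizer:
  fixes K :: "'a::euclidean_space set"
  assumes sc: "sph_convex K" and K: "K \<subseteq> sphere 0 1" and v: "v \<in> K" and k: "k \<in> K"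
    and vmax: "\<forall>k'\<in>K. inner x k' \<le> inner x v" and X0: "0 \<le> inner x v"
  shows "inner x k \<le> inner x v * inner v k"
proof -
  define c where "c = inner v k"
  define X where "X = inner x v"
  have nv: "norm v = 1" and nk: "norm k = 1" using K v k by auto
  then have vv: "inner v v = 1" and kk: "inner k k = 1" by (simp_all add: dot_square_norm)
  have c1: "c \<le> 1" using norm_cauchy_schwarz[of v k] nv nk unfolding c_def by simp
  have cm: "-1 \<le> c"
    using norm_cauchy_schwarz[of v "-k"] nv nk unfolding c_def by (simp add: inner_minus_right)
  \<comment> \<open>Compare $x$ with the normalized points of the arc from $v$ to $k$ near $v$.\<close>
  have arc: "inner x k - X \<le> - (1 - l) * (1 - c) * X" if l: "0 < l" "l < 1/2" for l
  proof -
    let ?w = "(1 - l) *\<^sub>R v + l *\<^sub>R k"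
    define e where "e = l * (1 - l) * (1 - c)"
    have nw2: "(norm ?w)\<^sup>2 = 1 - 2 * e"
      using vv kk unfolding e_def c_def
      by (simp add: power2_norm_eq_inner inner_add_left inner_add_right inner_commute algebra_simps)
    have "0 < (1/2 - l)\<^sup>2" using l by simp
    then have "l * (1 - l) < 1/4" by (simp add: power2_eq_square algebra_simps)
    moreover have "e \<le> l * (1 - l) * 2" unfolding e_def using l cm by (intro mult_left_mono) auto
    ultimately have "e < 1/2" by simp
    then have "?w \<noteq> 0" using nw2 by auto
    then have wpos: "norm ?w > 0" by simp
    have "(1 - e)\<^sup>2 = (norm ?w)\<^sup>2 + e\<^sup>2" unfolding nw2 by (simp add: power2_diff)
    then have "(norm ?w)\<^sup>2 \<le> (1 - e)\<^sup>2" by (metis le_add_same_cancel1 zero_le_power2)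
    then have nw: "norm ?w \<le> 1 - e" by (rule power2_le_imp_le) (use \<open>e < 1/2\<close> in simp)
    have "(1 / norm ?w) *\<^sub>R ?w \<in> K"
      using sph_convex_normalized_combination[OF sc v k] l wpos by auto
    then have "inner x ?w / norm ?w \<le> X" using vmax unfolding X_def by auto
    then have "inner x ?w \<le> norm ?w * X" using wpos by (simp add: divide_le_eq mult.commute)
    also have "\<dots> \<le> (1 - e) * X" using nw X0 unfolding X_def by (simp add: mult_right_mono)
    finally have "l * (inner x k - X) \<le> l * (- (1 - l) * (1 - c) * X)"
      by (simp add: inner_add_right X_def e_def algebra_simps)
    then show ?thesis using l by simp
  qed
  have "((\<lambda>l. - (1 - l) * (1 - c) * X) \<longlongrightarrow> - (1 - 0) * (1 - c) * X) (at_right 0)"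
    by (intro tendsto_intros)
  moreover have "\<forall>\<^sub>F l in at_right 0. l \<in> {0<..<1/2::real}"
    by (rule eventually_at_right_real) simp
  then have "\<forall>\<^sub>F l in at_right 0. inner x k - X \<le> - (1 - l) * (1 - c) * X"
    by (rule eventually_mono) (rule arc; auto)
  ultimately have "inner x k - X \<le> - (1 - 0) * (1 - c) * X"
    by (rule tendsto_lowerbound) simp
  then show ?thesis unfolding X_def c_def by (simp add: algebra_simps)
qed

subsection \<open>Spherical convexity gives reach at least $R$\<close>

lemma sph_convex_Rcone_radial_point:
  fixes K :: "'a::euclidean_space set"
  assumes R: "R > 0" and K: "K \<subseteq> sphere 0 1" and sc: "sph_convex K" and v: "v \<in> K"
    and vmax: "\<forall>k\<in>K. inner x k \<le> inner x v"
    and xv: "0 < norm (x - R *\<^sub>R v)" "norm (x - R *\<^sub>R v) \<le> R"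
  shows "R *\<^sub>R v + (R / norm (x - R *\<^sub>R v)) *\<^sub>R (x - R *\<^sub>R v) \<in> Rcone R K"
proof -
  define d where "d = norm (x - R *\<^sub>R v)"
  define al where "al = R / d"
  define p where "p = R *\<^sub>R v + al *\<^sub>R (x - R *\<^sub>R v)"
  have nv: "norm v = 1" using K v by auto
  have ald: "al * d = R" and al1: "1 \<le> al" using xv unfolding al_def d_def by auto
  have X: "R - d \<le> inner x v"
  proof -
    have "R - d \<le> norm x" using norm_triangle_ineq3[of x "R *\<^sub>R v"] nv R unfolding d_def by simp
    then have "(R - d)\<^sup>2 \<le> (norm x)\<^sup>2" using xv unfolding d_def by (simp add: power_mono)
    moreover have "d\<^sup>2 = (norm x)\<^sup>2 - 2 * R * inner x v + R\<^sup>2"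
      unfolding d_def using nv by (rule norm_diff_scaleR_unit_power2)
    ultimately have "2 * R * (R - d) \<le> 2 * R * inner x v"
      by (simp add: power2_eq_square algebra_simps)
    then show ?thesis using R by simp
  qed
  have "norm (p - R *\<^sub>R v) = R" unfolding p_def using al1 ald d_def by simp
  then have np: "(norm p)\<^sup>2 = 2 * R * inner p v"
    using norm_diff_power2[of p "R *\<^sub>R v"] nv by (simp add: power_mult_distrib)
  \<comment> \<open>As $p$ lies on the boundary of $B(Rv)$, membership in the cone reduces to $\langle p,k\rangle \le \langle p,v\rangle$.\<close>
  have pk: "inner p k \<le> inner p v" if k: "k \<in> K" for k
  proof -
    have c1: "inner v k \<le> 1" using norm_cauchy_schwarz[of v k] nv K k by auto
    have "inner x k \<le> inner x v * inner v k"
      using sph_convex_inner_le_at_maximizer[OF sc K v k vmax] X xv unfolding d_def by simp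
    then have h1: "al * ((1 - inner v k) * inner x v) \<le> al * (inner x v - inner x k)"
      using al1 by (intro mult_left_mono) (auto simp: algebra_simps)
    have "R * (al - 1) \<le> al * inner x v"
      using mult_left_mono[OF X, of al] al1 ald by (simp add: algebra_simps)
    then have h2: "(1 - inner v k) * (R * (al - 1)) \<le> (1 - inner v k) * (al * inner x v)"
      using c1 by (intro mult_left_mono) auto
    have "inner p k = R * inner v k + al * (inner x k - R * inner v k)"
      and "inner p v = R + al * (inner x v - R)"
      unfolding p_def using nv by (simp_all add: inner_add_left inner_diff_left dot_square_norm)
    then show ?thesis using h1 h2 by (simp add: algebra_simps)
  qed
  have "p \<in> Rcone R K"
    unfolding mem_Rcone_iff_inner[OF R K] np using pk R by simp
  then show ?thesis by (simp only: p_def al_def d_def)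
qed

lemma sph_convex_ball_subset_Unp_Rcone:
  fixes K :: "'a::euclidean_space set"
  assumes R: "R > 0" and K: "K \<subseteq> sphere 0 1" "closed K" and sc: "sph_convex K"
    and a: "a \<in> Rcone R K"
  shows "ball a R \<subseteq> Unp (Rcone R K)"
proof
  fix x assume xa: "x \<in> ball a R"
  show "x \<in> Unp (Rcone R K)"
  proof (cases "x \<in> Rcone R K")
    case True
    then show ?thesis by (rule mem_Unp_if_mem)
  next
    case False
    then obtain k0 where k0: "k0 \<in> K" "norm (x - R *\<^sub>R k0) < R"
      unfolding mem_Rcone_iff_dist by (auto simp: not_le)
    have cK: "compact K" using K compact_eq_bounded_closed bounded_subset[OF bounded_sphere] by blast
    have "continuous_on K (\<lambda>k. inner x k)" by (intro continuous_intros)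
    then obtain v where v: "v \<in> K" "\<forall>k\<in>K. inner x k \<le> inner x v"
      using continuous_attains_sup[OF cK, of "\<lambda>k. inner x k"] k0(1) by blast
    define d where "d = norm (x - R *\<^sub>R v)"
    have "(norm (x - R *\<^sub>R k))\<^sup>2 = (norm x)\<^sup>2 - 2 * R * inner x k + R\<^sup>2" if "k \<in> K" for k
      using K that by (intro norm_diff_scaleR_unit_power2) auto
    then have "d\<^sup>2 \<le> (norm (x - R *\<^sub>R k0))\<^sup>2"
      using v k0 R unfolding d_def by (simp add: mult_left_mono)
    also have "\<dots> < R\<^sup>2" using k0 by (simp add: power_strict_mono)
    finally have dR: "d < R" by (rule power2_less_imp_less) (use R in simp)
    have d0: "d > 0"
    proof (rule ccontr)
      assume "\<not> d > 0"
      then have "x = R *\<^sub>R v" unfolding d_def by simp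
      then show False using a v xa unfolding mem_Rcone_iff_dist by (auto simp: dist_norm)
    qed
    define p where "p = R *\<^sub>R v + (R / d) *\<^sub>R (x - R *\<^sub>R v)"
    have "Rcone R K \<inter> ball (R *\<^sub>R v) R = {}"
      unfolding Rcone_def using v by auto
    moreover have "p \<in> Rcone R K"
      using sph_convex_Rcone_radial_point[OF R K(1) sc v] d0 dR unfolding p_def d_def by simp
    moreover have "dist (R *\<^sub>R v) p = R"
      unfolding p_def dist_norm using d0 R by (simp add: d_def)
    moreover have "x = (1 - d / R) *\<^sub>R (R *\<^sub>R v) + (d / R) *\<^sub>R p"
      unfolding p_def using d0 R by (simp add: algebra_simps)
    then have "x \<in> closed_segment (R *\<^sub>R v) p"
      using d0 dR R unfolding in_segment by (intro exI[of _ "d / R"]) auto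
    moreover have "x \<noteq> R *\<^sub>R v" using d0 unfolding d_def by auto
    ultimately show ?thesis by (rule mem_Unp_if_touching_ball)
  qed
qed

subsection \<open>Reach at least $R$ forces spherical convexity\<close>

lemma not_mem_Unp_Rcone_scaled_exposed_point:
  fixes K :: "'a::euclidean_space set"
  assumes R: "R > 0" and K: "K \<subseteq> sphere 0 1" and q: "q \<in> convex hull (insert 0 K)"
    and exposed: "\<forall>k\<in>K. inner a k \<le> inner a q" and h: "0 < inner a q"
  shows "R *\<^sub>R q \<notin> Unp (Rcone R K)"
proof -
  define x where "x = R *\<^sub>R q"
  define c where "c = 2 * R * inner a q / (norm a)\<^sup>2"
  define p where "p = c *\<^sub>R a"
  have "a \<noteq> 0" using h by auto
  then have c0: "c > 0" and ca: "c * (norm a)\<^sup>2 = 2 * R * inner a q"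
    unfolding c_def using R h by simp_all
  have "(norm p)\<^sup>2 = c * (c * (norm a)\<^sup>2)"
    unfolding p_def using c0 by (simp add: power2_eq_square)
  then have np: "(norm p)\<^sup>2 = 2 * R * c * inner a q" using ca by simp
  \<comment> \<open>Both the vertex $0$ and $p$ are nearest points of the cone to $x$.\<close>
  have "p \<in> Rcone R K"
    unfolding mem_Rcone_iff_inner[OF R K] np
    using exposed R c0 by (simp add: p_def mult_left_mono)
  moreover have "p \<noteq> 0" unfolding p_def using c0 \<open>a \<noteq> 0\<close> by simp
  moreover have "dist x p = norm x"
  proof -
    have "(dist x p)\<^sup>2 = (norm x)\<^sup>2"
      using norm_diff_power2[of x p] np unfolding x_def p_def dist_norm by (simp add: inner_commute)
    then show ?thesis by (simp add: power2_eq_iff_nonneg)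
  qed
  moreover have "norm x \<le> dist x y" if y: "y \<in> Rcone R K" for y
  proof -
    have "2 * R * inner y q \<le> (norm y)\<^sup>2" using Rcone_inner_le_convex_hull[OF R K y q] .
    then have "(norm x)\<^sup>2 \<le> (dist x y)\<^sup>2"
      using norm_diff_power2[of x y] unfolding x_def dist_norm by (simp add: inner_commute)
    then show ?thesis by (rule power2_le_imp_le) simp
  qed
  ultimately show ?thesis
    using not_mem_Unp_if_two_nearest[OF zero_mem_Rcone[OF R K], of p x] unfolding x_def
    by (simp add: dist_commute[of x 0])
qed

lemma separating_direction_if_ball_subset_Unp_Rcone:
  fixes K :: "'a::euclidean_space set"
  assumes R: "R > 0" and K: "K \<subseteq> sphere 0 1" "closed K"
    and Unp: "ball 0 R \<subseteq> Unp (Rcone R K)" and u: "u \<in> sphere 0 1" "u \<notin> K"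
  obtains a where "\<forall>k\<in>K. inner a k \<le> 0" "0 < inner a u"
proof -
  define M where "M = convex hull (insert 0 K)"
  have "compact K" using K compact_eq_bounded_closed bounded_subset[OF bounded_sphere] by blast
  then have "closed M" "convex M" unfolding M_def
    by (simp_all add: compact_imp_closed compact_convex_hull)
  have "0 \<in> M" and KM: "K \<subseteq> M"
    unfolding M_def using hull_subset[of "insert 0 K" convex] by auto
  have "u \<notin> M" using convex_hull_insert_zero_inter_sphere[OF K(1)] u unfolding M_def by auto
  define q where "q = closest_point M u"
  define a where "a = u - q"
  have qM: "q \<in> M" unfolding q_def using closest_point_in_set \<open>closed M\<close> \<open>0 \<in> M\<close> by blast
  then have "a \<noteq> 0" using \<open>u \<notin> M\<close> unfolding a_def by auto
  have exposed: "inner a y \<le> inner a q" if "y \<in> M" for y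
    using closest_point_dot[OF \<open>convex M\<close> \<open>closed M\<close> that, of u]
    unfolding a_def q_def by (simp add: inner_diff_right)
  have "\<not> 0 < inner a q"
  proof
    assume h: "0 < inner a q"
    have "M \<subseteq> cball 0 1" unfolding M_def using K by (intro hull_minimal) auto
    then have "norm q \<le> 1" using qM by auto
    moreover have "norm q \<noteq> 1"
    proof
      assume "norm q = 1"
      have "inner u q \<le> 1" using norm_cauchy_schwarz[of u q] u \<open>norm q = 1\<close> by simp
      then show False using h \<open>norm q = 1\<close> unfolding a_def by (simp add: inner_diff_left dot_square_norm)
    qed
    ultimately have "R *\<^sub>R q \<in> ball 0 R" using R by simp
    then show False
      using not_mem_Unp_Rcone_scaled_exposed_point[OF R K(1) qM[unfolded M_def] _ h]
        exposed KM Unp by blast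
  qed
  moreover have "0 \<le> inner a q" using exposed[OF \<open>0 \<in> M\<close>] by simp
  ultimately have "inner a q = 0" by simp
  show thesis
  proof
    show "\<forall>k\<in>K. inner a k \<le> 0" using exposed KM \<open>inner a q = 0\<close> by auto
    have "inner a u = (norm a)\<^sup>2 + inner a q"
      unfolding a_def by (simp add: inner_diff_left inner_diff_right power2_norm_eq_inner inner_commute)
    then show "0 < inner a u" using \<open>inner a q = 0\<close> \<open>a \<noteq> 0\<close> by simp
  qed
qed

lemma sph_convex_if_ball_subset_Unp_Rcone:
  fixes K :: "'a::euclidean_space set"
  assumes R: "R > 0" and K: "K \<subseteq> sphere 0 1" "closed K"
    and Unp: "ball 0 R \<subseteq> Unp (Rcone R K)"
  shows "sph_convex K"
  unfolding sph_convex_def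
proof
  show "co_sph K \<subseteq> K"
  proof
    fix u assume u: "u \<in> co_sph K"
    show "u \<in> K"
    proof (rule ccontr)
      assume "u \<notin> K"
      moreover have "u \<in> sphere 0 1" using u unfolding co_sph_def by simp
      ultimately obtain a where "\<forall>k\<in>K. inner a k \<le> 0" "0 < inner a u"
        using separating_direction_if_ball_subset_Unp_Rcone[OF R K Unp] by blast
      then show False using inner_co_sph_le_zero[OF u] by fastforce
    qed
  qed
qed (rule subset_co_sph[OF K(1)])

subsection \<open>The normal cone at the vertex\<close>

lemma Nor_Rcone_inter_sphere_eq:
  fixes K :: "'a::euclidean_space set"
  assumes R: "R > 0" and K: "K \<subseteq> sphere 0 1" "closed K" and sc: "sph_convex K"
  shows "Nor (Rcone R K) 0 \<inter> sphere 0 1 = K"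
proof
  show "K \<subseteq> Nor (Rcone R K) 0 \<inter> sphere 0 1"
    using K unfolding Nor_Rcone_zero[OF R K(1)] by (auto simp: inner_commute)
  show "Nor (Rcone R K) 0 \<inter> sphere 0 1 \<subseteq> K"
  proof
    fix u assume u: "u \<in> Nor (Rcone R K) 0 \<inter> sphere 0 1"
    show "u \<in> K"
    proof (rule ccontr)
      assume "u \<notin> K"
      moreover have "ball 0 R \<subseteq> Unp (Rcone R K)"
        using sph_convex_ball_subset_Unp_Rcone[OF R K sc zero_mem_Rcone[OF R K(1)]] .
      ultimately obtain a where "\<forall>k\<in>K. inner a k \<le> 0" and au: "0 < inner a u"
        using separating_direction_if_ball_subset_Unp_Rcone[OF R K] u by blast
      then have "inner u a \<le> 0" using u unfolding Nor_Rcone_zero[OF R K(1)] by blast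
      with au show False by (simp add: inner_commute)
    qed
  qed
qed

lemma sph_convex_if_Rcone_eq:
  fixes K :: "'a::euclidean_space set"
  assumes R: "R > 0" and K: "K \<subseteq> sphere 0 1" "closed K" "K \<noteq> {}"
    and eq: "Rcone R K = Rcone R (Nor (Rcone R K) 0 \<inter> sphere 0 1)"
  shows "sph_convex K"
  unfolding sph_convex_def
proof
  show "co_sph K \<subseteq> K"
  proof
    fix u assume u: "u \<in> co_sph K"
    have nu: "norm u = 1" using u unfolding co_sph_def by simp
    have uN: "u \<in> Nor (Rcone R K) 0 \<inter> sphere 0 1"
      using inner_co_sph_le_zero[OF u] nu
      unfolding Nor_Rcone_zero[OF R K(1)] by (auto simp: inner_commute)
    show "u \<in> K"
    proof (rule ccontr)
      assume uK: "u \<notin> K"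
      have "compact K" using K compact_eq_bounded_closed bounded_subset[OF bounded_sphere] by blast
      moreover have "continuous_on K (\<lambda>k. inner u k)" by (intro continuous_intros)
      ultimately obtain k0 where k0: "k0 \<in> K" "\<forall>k\<in>K. inner u k \<le> inner u k0"
        using continuous_attains_sup[of K "\<lambda>k. inner u k"] K(3) by blast
      have "norm k0 = 1" using K k0 by auto
      have "inner u k0 < 1"
      proof -
        have "inner u k0 \<le> 1" using norm_cauchy_schwarz[of u k0] nu \<open>norm k0 = 1\<close> by simp
        moreover have "inner u k0 \<noteq> 1"
          using eq_if_norm_eq_inner_eq[OF nu \<open>norm k0 = 1\<close>] uK k0 by auto
        ultimately show ?thesis by simp
      qed
      define m where "m = max (inner u k0) 0"
      have m: "0 \<le> m" "m < 1" "inner u k0 \<le> m" unfolding m_def using \<open>inner u k0 < 1\<close> by auto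
      \<comment> \<open>The point $R(1+m)u$ lies in the $R$-cone of $K$ but in the ball $B(Ru)$ with $u \in \mathcal N$.\<close>
      define y where "y = (R * (1 + m)) *\<^sub>R u"
      have "y \<in> Rcone R K" unfolding mem_Rcone_iff_inner[OF R K(1)]
      proof
        fix k assume "k \<in> K"
        then have "2 * inner u k \<le> 1 + m" using k0 m by fastforce
        then have "(R * (R * (1 + m))) * (2 * inner u k) \<le> (R * (R * (1 + m))) * (1 + m)"
          using R m by (intro mult_left_mono) auto
        moreover have "inner y k = R * (1 + m) * inner u k" "norm y = R * (1 + m)"
          unfolding y_def using nu R m by simp_all
        ultimately show "2 * R * inner y k \<le> (norm y)\<^sup>2"
          by (simp add: power2_eq_square algebra_simps)
      qed
      moreover have "y \<notin> Rcone R (Nor (Rcone R K) 0 \<inter> sphere 0 1)"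
      proof -
        have "y - R *\<^sub>R u = (R * m) *\<^sub>R u" unfolding y_def by (simp add: algebra_simps)
        then have "norm (y - R *\<^sub>R u) < R" using nu R m by simp
        then show ?thesis using uN unfolding mem_Rcone_iff_dist by (meson not_le)
      qed
      ultimately show False using eq by simp
    qed
  qed
qed (rule subset_co_sph[OF K(1)])

theorem mainTheorem17:
  fixes R :: real and K :: "'a::euclidean_space set" and w :: 'a
  assumes "R > 0"
    and "K \<noteq> {}" and "closed K" and "K \<subseteq> sphere 0 1"
    and "w \<in> sphere 0 1" and "\<forall>v\<in>K. inner v w \<ge> 0"
  defines "N \<equiv> Nor (Rcone R K) 0 \<inter> sphere 0 1"
  shows "(sph_convex K \<longleftrightarrow> reach (Rcone R K) \<ge> ereal R)
       \<and> (reach (Rcone R K) \<ge> ereal R \<longleftrightarrow> Rcone R K = Rcone R N)"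
proof -
  note R = \<open>R > 0\<close> and K = \<open>K \<subseteq> sphere 0 1\<close> \<open>closed K\<close> \<open>K \<noteq> {}\<close>
  have ab: "sph_convex K \<longleftrightarrow> reach (Rcone R K) \<ge> ereal R"
  proof
    assume "sph_convex K"
    then show "reach (Rcone R K) \<ge> ereal R"
      using sph_convex_ball_subset_Unp_Rcone[OF R K(1,2)] by (intro reach_ge_if_balls_subset_Unp R)
  next
    assume "reach (Rcone R K) \<ge> ereal R"
    then show "sph_convex K"
      using ball_subset_Unp_if_reach_ge[OF zero_mem_Rcone[OF R K(1)]]
      by (intro sph_convex_if_ball_subset_Unp_Rcone[OF R K(1,2)])
  qed
  have "sph_convex K \<longleftrightarrow> Rcone R K = Rcone R N"
    using Nor_Rcone_inter_sphere_eq[OF R K(1,2)] sph_convex_if_Rcone_eq[OF R K]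
    unfolding N_def by metis
  with ab show ?thesis by blast
qed

end
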